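(* In the abstract boundary problem setting described in the context, let $A$ be a self-adjoint operator in $H_0$ with $T\subset A\subset T^*$ and $\mathcal D(A)=\operatorname{Ker}\gamma_0$. Then $\operatorname{Ker}\Gamma_0=\operatorname{Ker}\gamma_0$; in particular $\operatorname{Ker}\Gamma_0\subset H_1$.
   Context: Inner products are linear in the first argument and conjugate-linear in the second. Let $H_0$ be a separable Hilbert space with inner product $\langle\cdot,\cdot\rangle$, let $T$ be a closed densely defined symmetric operator in $H_0$ with adjoint $T^*$, and equip $\mathcal D(T^* )$ with the graph norm. Let $H_1\subset H_0$ be a dense subspace which is a Hilbert space in its own right with bounded inclusion $H_1\to H_0$. Let $K^\partial$ be a separable Hilbert space with inner product $\langle\cdot,\cdot\rangle_\partial$ and $K\subset K^\partial$ a dense subspace which is a Hilbert space in its own right with bounded inclusion. Let $K'$ be the space of continuous anti-linear functionals on $K$ (a Hilbert space with the dual norm); $K^\partial$ is regarded as a dense subspace of $K'$ via $y\mapsto(x\mapsto\langle y,x\rangle_\partial)$, so $K\subset K^\partial\subset K'$. For $y\in K'$, $x\in K$ put $\langle y,x\rangle_{K',K}=y(x)$ and $\langle x,y\rangle_{K,K'}=\overline{y(x)}$; these agree with $\langle\cdot,\cdot\rangle_\partial$ when $y\in K^\partial$. Standing assumptions: $H_1\subset\mathcal D(T^* )$ and $H_1$ is dense in $\mathcal D(T^* )$ in the graph norm; $T^*|_{H_1}:H_1\to H_0$ is bounded; $\gamma_0,\gamma_1:H_1\to K$ are bounded linear operators such that $\gamma=\gamma_0\oplus\gamma_1:H_1\to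 K\oplus K$ is surjective; $\operatorname{Ker}\gamma$ is dense in $H_0$ and $\mathcal D(T)=\operatorname{Ker}\gamma$; and the Lagrange identity $\langle T^*u,v\rangle-\langle u,T^*v\rangle=\langle\gamma_1u,\gamma_0v\rangle_\partial-\langle\gamma_0u,\gamma_1v\rangle_\partial$ holds for all $u,v\in H_1$. $\Gamma_0,\Gamma_1:\mathcal D(T^* )\to K'$ denote the (existing, unique) continuous extensions of $\gamma_0,\gamma_1$; they satisfy $\langle T^*u,v\rangle-\langle u,T^*v\rangle=\langle\Gamma_1u,\Gamma_0v\rangle_{K',K}-\langle\Gamma_0u,\Gamma_1v\rangle_{K',K}$ for $u\in\mathcal D(T^* )$, $v\in H_1$. *)

theory Defs
  imports Complex_Main "HOL-Library.Countable_Set"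
begin

class cvec = ab_group_add +
  fixes cscale :: "complex \<Rightarrow> 'a \<Rightarrow> 'a"  (infixr "*\<^sub>C" 75)
  assumes cscale_add_right: "a *\<^sub>C (x + y) = a *\<^sub>C x + a *\<^sub>C y"
      and cscale_add_left: "(a + b) *\<^sub>C x = a *\<^sub>C x + b *\<^sub>C x"
      and cscale_cscale: "a *\<^sub>C (b *\<^sub>C x) = (a * b) *\<^sub>C x"
      and cscale_one: "1 *\<^sub>C x = x"

definition csubspace :: "'a::cvec set \<Rightarrow> bool" where
  "csubspace X \<longleftrightarrow> 0 \<in> X \<and> (\<forall>x\<in>X. \<forall>y\<in>X. x + y \<in> X) \<and> (\<forall>a. \<forall>x\<in>X. a *\<^sub>C x \<in> X)"

definition cinner_on :: "('a::cvec \<Rightarrow> 'a \<Rightarrow> complex) \<Rightarrow> 'a set \<Rightarrow> bool" where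
  "cinner_on ip X \<longleftrightarrow>
     (\<forall>x\<in>X. \<forall>y\<in>X. \<forall>z\<in>X. ip (x + y) z = ip x z + ip y z) \<and>
     (\<forall>a. \<forall>x\<in>X. \<forall>y\<in>X. ip (a *\<^sub>C x) y = a * ip x y) \<and>
     (\<forall>x\<in>X. \<forall>y\<in>X. ip y x = cnj (ip x y)) \<and>
     (\<forall>x\<in>X. 0 \<le> Re (ip x x) \<and> (ip x x = 0 \<longrightarrow> x = 0))"

definition cnorm :: "('a \<Rightarrow> 'a \<Rightarrow> complex) \<Rightarrow> 'a \<Rightarrow> real" where
  "cnorm ip x = sqrt (Re (ip x x))"

definition dense_wrt :: "('a::ab_group_add \<Rightarrow> real) \<Rightarrow> 'a set \<Rightarrow> 'a set \<Rightarrow> bool" where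
  "dense_wrt N S X \<longleftrightarrow> (\<forall>x\<in>X. \<forall>e>0. \<exists>s\<in>S. N (x - s) < e)"

definition complete_wrt :: "('a::ab_group_add \<Rightarrow> real) \<Rightarrow> 'a set \<Rightarrow> bool" where
  "complete_wrt N X \<longleftrightarrow>
     (\<forall>s. (\<forall>n. s n \<in> X) \<and> (\<forall>e>0. \<exists>M. \<forall>m\<ge>M. \<forall>n\<ge>M. N (s m - s n) < e)
          \<longrightarrow> (\<exists>l\<in>X. (\<lambda>n. N (s n - l)) \<longlonglongrightarrow> 0))"

definition separable_wrt :: "('a::ab_group_add \<Rightarrow> real) \<Rightarrow> 'a set \<Rightarrow> bool" where
  "separable_wrt N X \<longleftrightarrow> (\<exists>D. countable D \<and> D \<subseteq> X \<and> dense_wrt N D X)"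

definition hilbert_on :: "('a::cvec \<Rightarrow> 'a \<Rightarrow> complex) \<Rightarrow> 'a set \<Rightarrow> bool" where
  "hilbert_on ip X \<longleftrightarrow> csubspace X \<and> cinner_on ip X \<and> complete_wrt (cnorm ip) X"

definition bounded_clinear_on ::
  "'a::cvec set \<Rightarrow> ('a \<Rightarrow> real) \<Rightarrow> 'b::cvec set \<Rightarrow> ('b \<Rightarrow> real) \<Rightarrow> ('a \<Rightarrow> 'b) \<Rightarrow> bool" where
  "bounded_clinear_on X N1 Y N2 f \<longleftrightarrow>
     (\<forall>x\<in>X. f x \<in> Y) \<and>
     (\<forall>x\<in>X. \<forall>y\<in>X. f (x + y) = f x + f y) \<and>
     (\<forall>a. \<forall>x\<in>X. f (a *\<^sub>C x) = a *\<^sub>C f x) \<and>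
     (\<exists>C. \<forall>x\<in>X. N2 (f x) \<le> C * N1 x)"

text \<open>Elements of the anti-dual K': continuous anti-linear functionals on (K,N).
  Only their values on K matter.\<close>
definition antidual_elem :: "'k::cvec set \<Rightarrow> ('k \<Rightarrow> real) \<Rightarrow> ('k \<Rightarrow> complex) \<Rightarrow> bool" where
  "antidual_elem K N \<phi> \<longleftrightarrow>
     (\<forall>x\<in>K. \<forall>y\<in>K. \<phi> (x + y) = \<phi> x + \<phi> y) \<and>
     (\<forall>a. \<forall>x\<in>K. \<phi> (a *\<^sub>C x) = cnj a * \<phi> x) \<and>
     (\<exists>C. \<forall>x\<in>K. cmod (\<phi> x) \<le> C * N x)"

text \<open>A (possibly unbounded) linear operator in H0 = UNIV, given by its graph.\<close>
definition lin_op :: "('a::cvec \<times> 'a) set \<Rightarrow> bool" where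
  "lin_op G \<longleftrightarrow> (0, 0) \<in> G \<and>
     (\<forall>v z v' z'. (v, z) \<in> G \<and> (v', z') \<in> G \<longrightarrow> (v + v', z + z') \<in> G) \<and>
     (\<forall>a v z. (v, z) \<in> G \<longrightarrow> (a *\<^sub>C v, a *\<^sub>C z) \<in> G) \<and>
     (\<forall>z. (0, z) \<in> G \<longrightarrow> z = 0)"

definition opval :: "('a \<times> 'b) set \<Rightarrow> 'a \<Rightarrow> 'b" where
  "opval G u = (THE w. (u, w) \<in> G)"

definition adjoint_graph :: "('a \<Rightarrow> 'a \<Rightarrow> complex) \<Rightarrow> ('a \<times> 'a) set \<Rightarrow> ('a \<times> 'a) set" where
  "adjoint_graph ip G = {(u, w). \<forall>(v, z)\<in>G. ip z u = ip v w}"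

definition closed_op :: "('a::cvec \<Rightarrow> 'a \<Rightarrow> complex) \<Rightarrow> ('a \<times> 'a) set \<Rightarrow> bool" where
  "closed_op ip G \<longleftrightarrow>
     (\<forall>v z x y. (\<forall>n. (v n, z n) \<in> G) \<and> (\<lambda>n. cnorm ip (v n - x)) \<longlonglongrightarrow> 0
                  \<and> (\<lambda>n. cnorm ip (z n - y)) \<longlonglongrightarrow> 0 \<longrightarrow> (x, y) \<in> G)"

definition densely_defined :: "('a::cvec \<Rightarrow> 'a \<Rightarrow> complex) \<Rightarrow> ('a \<times> 'a) set \<Rightarrow> bool" where
  "densely_defined ip G \<longleftrightarrow> dense_wrt (cnorm ip) (Domain G) UNIV"

definition symmetric_op :: "('a::cvec \<Rightarrow> 'a \<Rightarrow> complex) \<Rightarrow> ('a \<times> 'a) set \<Rightarrow> bool" where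
  "symmetric_op ip G \<longleftrightarrow> G \<subseteq> adjoint_graph ip G"

definition selfadjoint_op :: "('a::cvec \<Rightarrow> 'a \<Rightarrow> complex) \<Rightarrow> ('a \<times> 'a) set \<Rightarrow> bool" where
  "selfadjoint_op ip G \<longleftrightarrow> lin_op G \<and> densely_defined ip G \<and> adjoint_graph ip G = G"

definition graph_norm :: "('a::cvec \<Rightarrow> 'a \<Rightarrow> complex) \<Rightarrow> ('a \<times> 'a) set \<Rightarrow> 'a \<Rightarrow> real" where
  "graph_norm ip G u = sqrt ((cnorm ip u)\<^sup>2 + (cnorm ip (opval G u))\<^sup>2)"

end

theory Submission
  imports Defs
begin

text \<open>Let \<open>u \<in> Ker \<Gamma>\<^sub>0\<close>. For every \<open>v \<in> \<D>(A) = Ker \<gamma>\<^sub>0\<close> the extended Lagrange identity gives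
  \<open>\<langle>T\<^sup>*u, v\<rangle> - \<langle>u, Av\<rangle> = \<Gamma>\<^sub>1u(\<gamma>\<^sub>0v) - \<Gamma>\<^sub>0u(\<gamma>\<^sub>1v) = 0\<close>, so \<open>u \<in> \<D>(A\<^sup>*) = \<D>(A)\<close>.
  The reverse inclusion holds because \<open>\<Gamma>\<^sub>0\<close> extends \<open>\<gamma>\<^sub>0\<close>.\<close>

lemma cinner_on_zero_left:
  assumes "cinner_on ip (UNIV::'a::cvec set)"
  shows "ip 0 y = 0"
proof -
  have "ip (0 + 0) y = ip 0 y + ip 0 y"
    using assms unfolding cinner_on_def by blast
  then show ?thesis by simp
qed

lemma cinner_on_cnj:
  assumes "cinner_on ip (UNIV::'a::cvec set)"
  shows "ip x y = cnj (ip y x)"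
  using assms unfolding cinner_on_def by blast

lemma cinner_on_diff_left:
  assumes "cinner_on ip (UNIV::'a::cvec set)"
  shows "ip (x - y) z = ip x z - ip y z"
proof -
  have "ip ((x - y) + y) z = ip (x - y) z + ip y z"
    using assms unfolding cinner_on_def by blast
  then show ?thesis by simp
qed

lemma cinner_on_diff_right:
  assumes "cinner_on ip (UNIV::'a::cvec set)"
  shows "ip z (x - y) = ip z x - ip z y"
  using cinner_on_diff_left[OF assms, of x y z] cinner_on_cnj[OF assms]
  by (metis complex_cnj_diff)

lemma cnorm_eq_zero:
  assumes "cinner_on ip (UNIV::'a::cvec set)" "cnorm ip w = 0"
  shows "w = 0"
proof -
  have sym: "ip w w = cnj (ip w w)" and pos: "0 \<le> Re (ip w w)"
    and definite: "ip w w = 0 \<longrightarrow> w = 0"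
    using assms(1) unfolding cinner_on_def by blast+
  have "Re (ip w w) = 0" using assms(2) pos unfolding cnorm_def by simp
  moreover have "Im (ip w w) = 0" using sym by (metis cnj.sel(2) neg_equal_zero)
  ultimately show ?thesis using definite by (simp add: complex_eq_iff)
qed

lemma orthogonal_to_dense_eq_zero:
  assumes ci: "cinner_on ip (UNIV::'a::cvec set)"
    and dense: "dense_wrt (cnorm ip) S UNIV"
    and orth: "\<And>p. p \<in> S \<Longrightarrow> ip p w = 0"
  shows "w = 0"
proof -
  have pos: "\<And>a. 0 \<le> Re (ip a a)" using ci unfolding cinner_on_def by blast
  have small: "cnorm ip w < e" if "e > 0" for e
  proof -
    obtain p where p: "p \<in> S" "cnorm ip (w - p) < e"
      using dense \<open>e > 0\<close> unfolding dense_wrt_def by blast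
    have "ip p w = 0" "ip w p = 0" using orth[OF p(1)] cinner_on_cnj[OF ci, of w p] by simp_all
    then have "Re (ip (w - p) (w - p)) = Re (ip w w) + Re (ip p p)"
      using cinner_on_diff_left[OF ci] cinner_on_diff_right[OF ci] by simp
    then have "cnorm ip w \<le> cnorm ip (w - p)"
      using pos[of p] unfolding cnorm_def by simp
    then show ?thesis using p(2) by simp
  qed
  have "cnorm ip w \<ge> 0" unfolding cnorm_def using pos by simp
  then have "cnorm ip w = 0"
    using small by (metis less_le_not_le linorder_neqE_linordered_idom)
  then show ?thesis using cnorm_eq_zero[OF ci] by blast
qed

lemma adjoint_graph_single_valued:
  assumes ci: "cinner_on ip (UNIV::'a::cvec set)"
    and dd: "densely_defined ip T"
    and "(v, z1) \<in> adjoint_graph ip T" "(v, z2) \<in> adjoint_graph ip T"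
  shows "z1 = z2"
proof -
  have "ip p (z1 - z2) = 0" if "p \<in> Domain T" for p
  proof -
    obtain q where "(p, q) \<in> T" using \<open>p \<in> Domain T\<close> by blast
    then have "ip q v = ip p z1" "ip q v = ip p z2"
      using assms(3,4) unfolding adjoint_graph_def by auto
    then show ?thesis using cinner_on_diff_right[OF ci] by simp
  qed
  then have "z1 - z2 = 0"
    using orthogonal_to_dense_eq_zero[OF ci] dd unfolding densely_defined_def by blast
  then show ?thesis by simp
qed

lemma opval_adjoint_graph:
  assumes "cinner_on ip (UNIV::'a::cvec set)" "densely_defined ip T"
    and "(v, z) \<in> adjoint_graph ip T"
  shows "opval (adjoint_graph ip T) v = z"
  unfolding opval_def
  using assms adjoint_graph_single_valued[OF assms(1,2)] by (intro the_equality) blast+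

lemma antidual_elem_zero:
  assumes "antidual_elem K N \<phi>" "0 \<in> K"
  shows "\<phi> 0 = 0"
proof -
  have "\<phi> (0 + 0) = \<phi> 0 + \<phi> 0" using assms unfolding antidual_elem_def by blast
  then show ?thesis by simp
qed

lemma selfadjoint_op_DomainI:
  assumes "selfadjoint_op ip A" "\<And>v z. (v, z) \<in> A \<Longrightarrow> ip z u = ip v w"
  shows "u \<in> Domain A"
proof -
  have "(u, w) \<in> adjoint_graph ip A" using assms(2) unfolding adjoint_graph_def by blast
  then show ?thesis using assms(1) unfolding selfadjoint_op_def by blast
qed

theorem lemma4p4:
  fixes ip0 :: "'h::cvec \<Rightarrow> 'h \<Rightarrow> complex"   \<comment> \<open>inner product of H0 = UNIV\<close>
    and T :: "('h \<times> 'h) set"                  \<comment> \<open>graph of T\<close>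
    and H1 :: "'h set" and ip1 :: "'h \<Rightarrow> 'h \<Rightarrow> complex"
    and ipd :: "'k::cvec \<Rightarrow> 'k \<Rightarrow> complex"    \<comment> \<open>inner product of K^\<partial> = UNIV\<close>
    and K :: "'k set" and ipK :: "'k \<Rightarrow> 'k \<Rightarrow> complex"
    and \<gamma>0 \<gamma>1 :: "'h \<Rightarrow> 'k"
    and \<Gamma>0 \<Gamma>1 :: "'h \<Rightarrow> 'k \<Rightarrow> complex"        \<comment> \<open>values in the anti-dual K'\<close>
    and A :: "('h \<times> 'h) set"                  \<comment> \<open>graph of A\<close>
  defines "Ts \<equiv> adjoint_graph ip0 T"
  assumes H0: "hilbert_on ip0 UNIV" "separable_wrt (cnorm ip0) UNIV"
    and T_op: "lin_op T" "closed_op ip0 T" "densely_defined ip0 T" "symmetric_op ip0 T"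
    and H1: "hilbert_on ip1 H1" "dense_wrt (cnorm ip0) H1 UNIV"
            "\<exists>C. \<forall>x\<in>H1. cnorm ip0 x \<le> C * cnorm ip1 x"
    and Kd: "hilbert_on ipd UNIV" "separable_wrt (cnorm ipd) UNIV"
    and K: "hilbert_on ipK K" "dense_wrt (cnorm ipd) K UNIV"
           "\<exists>C. \<forall>x\<in>K. cnorm ipd x \<le> C * cnorm ipK x"
    and H1_dom: "H1 \<subseteq> Domain Ts" "dense_wrt (graph_norm ip0 Ts) H1 (Domain Ts)"
    and Ts_bdd: "\<exists>C. \<forall>u\<in>H1. cnorm ip0 (opval Ts u) \<le> C * cnorm ip1 u"
    and gam: "bounded_clinear_on H1 (cnorm ip1) K (cnorm ipK) \<gamma>0"
             "bounded_clinear_on H1 (cnorm ip1) K (cnorm ipK) \<gamma>1"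
    and gam_surj: "\<forall>a\<in>K. \<forall>b\<in>K. \<exists>u\<in>H1. \<gamma>0 u = a \<and> \<gamma>1 u = b"
    and ker_dense: "dense_wrt (cnorm ip0) {u\<in>H1. \<gamma>0 u = 0 \<and> \<gamma>1 u = 0} UNIV"
    and dom_T: "Domain T = {u\<in>H1. \<gamma>0 u = 0 \<and> \<gamma>1 u = 0}"
    and lagrange: "\<forall>u\<in>H1. \<forall>v\<in>H1.
        ip0 (opval Ts u) v - ip0 u (opval Ts v) = ipd (\<gamma>1 u) (\<gamma>0 v) - ipd (\<gamma>0 u) (\<gamma>1 v)"
    and Gam_K': "\<forall>u\<in>Domain Ts. antidual_elem K (cnorm ipK) (\<Gamma>0 u) \<and> antidual_elem K (cnorm ipK) (\<Gamma>1 u)"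
    and Gam_lin: "\<forall>u\<in>Domain Ts. \<forall>v\<in>Domain Ts. \<forall>a. \<forall>x\<in>K.
        \<Gamma>0 (u + v) x = \<Gamma>0 u x + \<Gamma>0 v x \<and> \<Gamma>1 (u + v) x = \<Gamma>1 u x + \<Gamma>1 v x \<and>
        \<Gamma>0 (a *\<^sub>C u) x = a * \<Gamma>0 u x \<and> \<Gamma>1 (a *\<^sub>C u) x = a * \<Gamma>1 u x"
    and Gam_bdd: "\<exists>C. \<forall>u\<in>Domain Ts. \<forall>x\<in>K.
        cmod (\<Gamma>0 u x) \<le> C * graph_norm ip0 Ts u * cnorm ipK x \<and>
        cmod (\<Gamma>1 u x) \<le> C * graph_norm ip0 Ts u * cnorm ipK x"
    and Gam_ext: "\<forall>u\<in>H1. \<forall>x\<in>K. \<Gamma>0 u x = ipd (\<gamma>0 u) x \<and> \<Gamma>1 u x = ipd (\<gamma>1 u) x"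
    and lagrange_ext: "\<forall>u\<in>Domain Ts. \<forall>v\<in>H1.
        ip0 (opval Ts u) v - ip0 u (opval Ts v) = \<Gamma>1 u (\<gamma>0 v) - \<Gamma>0 u (\<gamma>1 v)"
    and A_sa: "selfadjoint_op ip0 A"
    and A_ext: "T \<subseteq> A" "A \<subseteq> Ts"
    and dom_A: "Domain A = {u\<in>H1. \<gamma>0 u = 0}"
  shows "{u\<in>Domain Ts. \<forall>x\<in>K. \<Gamma>0 u x = 0} = {u\<in>H1. \<gamma>0 u = 0}
         \<and> {u\<in>Domain Ts. \<forall>x\<in>K. \<Gamma>0 u x = 0} \<subseteq> H1"
proof -
  have ci: "cinner_on ip0 UNIV" using H0(1) unfolding hilbert_on_def by blast
  have cd: "cinner_on ipd UNIV" using Kd(1) unfolding hilbert_on_def by blast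
  have "0 \<in> K" using K(1) unfolding hilbert_on_def csubspace_def by blast
  have Ts_val: "opval Ts v = z" if "(v, z) \<in> Ts" for v z
    using opval_adjoint_graph[OF ci T_op(3)] that unfolding Ts_def by blast
  have "u \<in> Domain A" if uD: "(u, w) \<in> Ts" and ker: "\<forall>x\<in>K. \<Gamma>0 u x = 0" for u w
  proof (rule selfadjoint_op_DomainI[OF A_sa])
    fix v z assume "(v, z) \<in> A"
    then have v: "v \<in> H1" "\<gamma>0 v = 0" and "(v, z) \<in> Ts" using dom_A A_ext(2) by auto
    have "\<gamma>1 v \<in> K" using gam(2) v(1) unfolding bounded_clinear_on_def by blast
    have "\<Gamma>1 u 0 = 0"
      using antidual_elem_zero[OF _ \<open>0 \<in> K\<close>] Gam_K' uD by blast
    have "ip0 w v - ip0 u z = \<Gamma>1 u (\<gamma>0 v) - \<Gamma>0 u (\<gamma>1 v)"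
      using lagrange_ext[rule_format, of u v] uD v(1)
      unfolding Ts_val[OF uD] Ts_val[OF \<open>(v, z) \<in> Ts\<close>] by blast
    also have "\<dots> = 0" using \<open>\<Gamma>1 u 0 = 0\<close> ker \<open>\<gamma>1 v \<in> K\<close> v(2) by simp
    finally show "ip0 z u = ip0 v w"
      using cinner_on_cnj[OF ci, of z u] cinner_on_cnj[OF ci, of v w] by simp
  qed
  then have "{u\<in>Domain Ts. \<forall>x\<in>K. \<Gamma>0 u x = 0} \<subseteq> {u\<in>H1. \<gamma>0 u = 0}"
    using dom_A by blast
  moreover have "{u\<in>H1. \<gamma>0 u = 0} \<subseteq> {u\<in>Domain Ts. \<forall>x\<in>K. \<Gamma>0 u x = 0}"
    using H1_dom(1) Gam_ext cinner_on_zero_left[OF cd] by auto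
  ultimately show ?thesis by blast
qed

end
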